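(* Consider one of the three families (bucket recursive trees, $(b,d)$-ary increasing trees, $(b,\alpha)$-PORTs) generated by the growth process. Let $j\ge1$ and $\ell\in\{1,\dots,b\}$ with $\mathbb P\{K_j=\ell\}>0$, and let $Y_{n,\ell,j}$ denote $Y_{n,j}$ conditioned on $K_j=\ell$, for $n\ge j$. For $i\ge j$ let $A_{i,\ell,j}$ be the indicator (under the same conditioning) that label $i$ is a descendant of label $j$. Then $A_{j,\ell,j}=1$, $$Y_{n,\ell,j}=\sum_{i=j}^nA_{i,\ell,j},$$ and for $i\ge j$, $$\mathbb P\{A_{i+1,\ell,j}=1\mid Y_{i,\ell,j}\}=\begin{cases}\frac{\ell-1+Y_{i,\ell,j}}{i},&\text{bucket recursive trees},\\ \frac{(d-1)(\ell-1+Y_{i,\ell,j})+1}{(d-1)i+1},&\text{$(b,d)$-ary increasing trees},\\ \frac{(\alpha+1)(\ell-1+Y_{i,\ell,j})-1}{(\alpha+1)i-1},&\text{$(b,\alpha)$-PORTs}.\end{cases}$$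
   Context: Fix $b\ge1$. A bucket tree is a rooted unordered tree whose nodes ("buckets") $v$ contain $c(v)\in\{1,\dots,b\}$ labels (capacity); $v$ is saturated if $c(v)=b$, and every node with a child is saturated; $d^+(v)$ is its number of children; the size is the total number of labels. Growth process: start with a root bucket containing label 1; given the tree of size $n\ge1$, choose a node $v$ with probability $p(v)$; if $v$ is unsaturated, add label $n+1$ to $v$, otherwise attach to $v$ a new child bucket containing only $n+1$. Families: bucket recursive trees $p(v)=c(v)/n$; $(b,d)$-ary increasing trees ($d\ge2$ integer) $p(v)=\frac{(d-1)c(v)+1-d^+(v)}{(d-1)n+1}$; $(b,\alpha)$-plane oriented recursive trees, $(b,\alpha)$-PORTs ($\alpha>0$) $p(v)=\frac{d^+(v)+(\alpha+1)c(v)-1}{(\alpha+1)n-1}$ (capacities and out-degrees in the current tree of size $n$). $K_j$ is the capacity of the bucket containing label $j$ in the tree of size $j$ (its initial bucket size). $Y_{n,j}$ (number of descendants of label $j$) is the number of labels $\ge j$ contained in the subtree rooted at the bucket containing label $j$, in the tree of size $n$; a label $i\ge j$ is a descendant of $j$ if it is counted there. *)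

theory Defs
  imports "HOL-Probability.Probability_Mass_Function"
begin

text \<open>
A bucket tree of size n grown by the process is encoded by its history
h :: nat list of length n-1: the entry h!(k-2) is the bucket chosen at the step
that inserted label k (k = 2..n). Each bucket is identified by the smallest label
it contains (the label that created it); the root bucket has id 1.
\<close>

function bkt :: "nat \<Rightarrow> nat list \<Rightarrow> nat \<Rightarrow> nat" where
  "bkt b h k =
     (if k \<le> 1 then 1
      else (let c = h ! (k - 2)
            in if length (filter (\<lambda>m. bkt b h m = c) [1..<k]) < b then c else k))"
  by pat_completeness auto
termination
  by (relation "Wellfounded.measure (\<lambda>(b, h, k). k)") auto

declare bkt.simps[simp del]

definition buckets :: "nat \<Rightarrow> nat list \<Rightarrow> nat \<Rightarrow> nat set" where
  "buckets b h n = {v \<in> {1..n}. bkt b h v = v}"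

definition cap :: "nat \<Rightarrow> nat list \<Rightarrow> nat \<Rightarrow> nat \<Rightarrow> nat" where
  "cap b h n v = card {m \<in> {1..n}. bkt b h m = v}"

definition outdeg :: "nat \<Rightarrow> nat list \<Rightarrow> nat \<Rightarrow> nat \<Rightarrow> nat" where
  "outdeg b h n v = card {m \<in> {2..n}. bkt b h m = m \<and> h ! (m - 2) = v}"

datatype family = BRT | Dary nat | PORT real

definition valid_family :: "family \<Rightarrow> bool" where
  "valid_family fam = (case fam of BRT \<Rightarrow> True | Dary d \<Rightarrow> d \<ge> 2 | PORT \<alpha> \<Rightarrow> \<alpha> > 0)"

definition weight :: "family \<Rightarrow> nat \<Rightarrow> nat list \<Rightarrow> nat \<Rightarrow> nat \<Rightarrow> real" where
  "weight fam b h n v = (case fam of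
      BRT \<Rightarrow> real (cap b h n v) / real n
    | Dary d \<Rightarrow> ((real d - 1) * real (cap b h n v) + 1 - real (outdeg b h n v))
                / ((real d - 1) * real n + 1)
    | PORT \<alpha> \<Rightarrow> (real (outdeg b h n v) + (\<alpha> + 1) * real (cap b h n v) - 1)
                / ((\<alpha> + 1) * real n - 1))"

definition choose_bucket :: "family \<Rightarrow> nat \<Rightarrow> nat list \<Rightarrow> nat \<Rightarrow> nat pmf" where
  "choose_bucket fam b h n =
     pmf_of_list (map (\<lambda>v. (v, weight fam b h n v))
                      (filter (\<lambda>v. bkt b h v = v) [1..<Suc n]))"

primrec tree_pmf :: "family \<Rightarrow> nat \<Rightarrow> nat \<Rightarrow> nat list pmf" where
  "tree_pmf fam b 0 = return_pmf []"
| "tree_pmf fam b (Suc n) =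
     (if n = 0 then return_pmf []
      else bind_pmf (tree_pmf fam b n)
             (\<lambda>h. map_pmf (\<lambda>v. h @ [v]) (choose_bucket fam b h n)))"

text \<open>Bucket r is an ancestor-or-self of bucket c (parent of bucket c \<ge> 2 is h!(c-2)).\<close>
inductive in_subtree :: "nat \<Rightarrow> nat list \<Rightarrow> nat \<Rightarrow> nat \<Rightarrow> bool" for b h where
  self: "in_subtree b h r r"
| step: "\<lbrakk>c \<ge> 2; bkt b h c = c; in_subtree b h r (h ! (c - 2))\<rbrakk> \<Longrightarrow> in_subtree b h r c"

definition desc :: "nat \<Rightarrow> nat list \<Rightarrow> nat \<Rightarrow> nat \<Rightarrow> bool" where
  "desc b h j i = (j \<le> i \<and> in_subtree b h (bkt b h j) (bkt b h i))"

definition Aind :: "nat \<Rightarrow> nat list \<Rightarrow> nat \<Rightarrow> nat \<Rightarrow> nat" where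
  "Aind b h j i = (if desc b h j i then 1 else 0)"

definition Ydesc :: "nat \<Rightarrow> nat list \<Rightarrow> nat \<Rightarrow> nat \<Rightarrow> nat" where
  "Ydesc b h n j = card {i \<in> {j..n}. desc b (take (n - 1) h) j i}"

definition Kcap :: "nat \<Rightarrow> nat list \<Rightarrow> nat \<Rightarrow> nat" where
  "Kcap b h j = (let h' = take (j - 1) h in cap b h' j (bkt b h' j))"

definition cond_formula :: "family \<Rightarrow> nat \<Rightarrow> nat \<Rightarrow> nat \<Rightarrow> real" where
  "cond_formula fam l i y = (case fam of
      BRT \<Rightarrow> (real l - 1 + real y) / real i
    | Dary d \<Rightarrow> ((real d - 1) * (real l - 1 + real y) + 1) / ((real d - 1) * real i + 1)
    | PORT \<alpha> \<Rightarrow> ((\<alpha> + 1) * (real l - 1 + real y) - 1) / ((\<alpha> + 1) * real i - 1))"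

end

theory Submission
  imports Defs
begin

text \<open>
  Let r be the bucket of label j in the tree of size i and S the set of buckets in the subtree
  rooted at r. The labels lying in buckets of S are the K_j - 1 labels that preceded j in r
  together with the Y_{i,j} descendants of j, and S, being a subtree, has card S - 1 internal
  edges. Each selection probability p(v) is affine in c(v), d^+(v) and 1, so the probability
  that label i + 1 is attached inside S, i.e. becomes a descendant of j, is the stated affine
  function of K_j - 1 + Y_{i,j}. Since K_j and Y_{i,j} are determined by the tree of size i,
  conditioning on their values gives the same expression.
\<close>

definition wf_history :: "nat \<Rightarrow> nat list \<Rightarrow> nat \<Rightarrow> bool" where
  "wf_history b h n \<longleftrightarrow> 1 \<le> n \<and> length h = n - 1 \<and>
     (\<forall>k\<in>{2..n}. 1 \<le> h ! (k - 2) \<and> h ! (k - 2) < k \<and> bkt b h (h ! (k - 2)) = h ! (k - 2))"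

lemma wf_history_parent:
  assumes "wf_history b h n" "2 \<le> k" "k \<le> n"
  shows "1 \<le> h ! (k - 2) \<and> h ! (k - 2) < k \<and> bkt b h (h ! (k - 2)) = h ! (k - 2)"
  using assms unfolding wf_history_def by auto

lemma length_filter_upt: "length (filter P [a..<c]) = card {m \<in> {a..<c}. P m}"
  by (subst distinct_card[symmetric]) auto

lemma bkt_unfold:
  "bkt b h k = (if k \<le> 1 then 1
     else if card {m \<in> {1..<k}. bkt b h m = h ! (k - 2)} < b then h ! (k - 2) else k)"
  by (subst bkt.simps) (simp add: length_filter_upt Let_def)

lemma bkt_le_1 [simp]: "k \<le> 1 \<Longrightarrow> bkt b h k = 1"
  by (simp add: bkt_unfold)

lemma bkt_prefix_cong:
  assumes agree: "\<And>k. 2 \<le> k \<Longrightarrow> k \<le> K \<Longrightarrow> h ! (k - 2) = h' ! (k - 2)" and "m \<le> K"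
  shows "bkt b h m = bkt b h' m"
  using \<open>m \<le> K\<close>
proof (induction m rule: less_induct)
  case (less m)
  show ?case
  proof (cases "m \<le> 1")
    case False
    have parent: "h ! (m - 2) = h' ! (m - 2)" using agree less.prems False by auto
    have "{x \<in> {1..<m}. bkt b h x = h ! (m - 2)} = {x \<in> {1..<m}. bkt b h' x = h' ! (m - 2)}"
      using less.IH less.prems parent by auto
    then show ?thesis using False parent by (simp add: bkt_unfold[of b h m] bkt_unfold[of b h' m])
  qed simp
qed

lemma bkt_bounds:
  assumes wf: "wf_history b h n" and "1 \<le> m" "m \<le> n"
  shows "1 \<le> bkt b h m \<and> bkt b h m \<le> m \<and> bkt b h (bkt b h m) = bkt b h m"
proof (cases "m \<le> 1 \<or> bkt b h m = m")
  case False
  then have "bkt b h m = h ! (m - 2)" by (auto simp: bkt_unfold[of b h m] split: if_splits)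
  then show ?thesis using wf_history_parent[OF wf, of m] False assms(3) by auto
qed (use assms in auto)

lemma finite_buckets [simp]: "finite (buckets b h n)"
  by (simp add: buckets_def)

lemma bkt_in_buckets: "wf_history b h n \<Longrightarrow> 1 \<le> m \<Longrightarrow> m \<le> n \<Longrightarrow> bkt b h m \<in> buckets b h n"
  using bkt_bounds[of b h n m] by (auto simp: buckets_def)

lemma cap_pos: "u \<in> buckets b h n \<Longrightarrow> 1 \<le> cap b h n u"
  unfolding cap_def buckets_def by (auto simp: Suc_le_eq card_gt_0_iff)

lemma in_subtree_le:
  assumes wf: "wf_history b h n"
  shows "in_subtree b h r x \<Longrightarrow> x \<le> n \<Longrightarrow> r \<le> x"
proof (induction rule: in_subtree.induct)
  case (step c)
  then show ?case using wf_history_parent[OF wf, of c] by auto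
qed simp

lemma in_subtree_child:
  assumes wf: "wf_history b h n"
  shows "in_subtree b h r x \<Longrightarrow> x \<le> n \<Longrightarrow> x \<noteq> r \<Longrightarrow>
    \<exists>c. 2 \<le> c \<and> c \<le> x \<and> bkt b h c = c \<and> h ! (c - 2) = r"
proof (induction rule: in_subtree.induct)
  case (step c r)
  have "h ! (c - 2) < c" using wf_history_parent[OF wf] step by auto
  with step show ?case by (cases "h ! (c - 2) = r") (auto intro: le_trans)
qed simp

lemma in_subtree_prefix_cong:
  assumes agree: "\<And>k. 2 \<le> k \<Longrightarrow> k \<le> K \<Longrightarrow> h ! (k - 2) = h' ! (k - 2)"
    and parent_less: "\<And>k. 2 \<le> k \<Longrightarrow> k \<le> K \<Longrightarrow> h ! (k - 2) < k"
  shows "in_subtree b h r x \<Longrightarrow> x \<le> K \<Longrightarrow> in_subtree b h' r x"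
proof (induction rule: in_subtree.induct)
  case (step c r)
  have "bkt b h c = bkt b h' c" by (rule bkt_prefix_cong[OF agree]) (use step in simp_all)
  then have "bkt b h' c = c" using step by simp
  moreover have "in_subtree b h' r (h' ! (c - 2))"
    using step agree[of c] parent_less[of c] by simp
  ultimately show ?case using step.hyps(1) by (auto intro: in_subtree.step)
qed (rule in_subtree.self)

lemma in_subtree_root:
  assumes wf: "wf_history b h n"
  shows "u \<in> buckets b h n \<Longrightarrow> in_subtree b h 1 u"
proof (induction u rule: less_induct)
  case (less u)
  show ?case
  proof (cases "u = 1")
    case False
    then have u: "2 \<le> u" "u \<le> n" "bkt b h u = u" using less.prems by (auto simp: buckets_def)
    with wf_history_parent[OF wf u(1,2)] have "h ! (u - 2) \<in> buckets b h n" "h ! (u - 2) < u"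
      by (auto simp: buckets_def)
    with less.IH u show ?thesis by (blast intro: in_subtree.step)
  qed (simp add: in_subtree.self)
qed

lemma Kcap_conv_card:
  assumes "1 \<le> j"
  shows "Kcap b h j = card {m \<in> {1..j}. bkt b h m = bkt b h j}"
proof -
  have "bkt b (take (j - 1) h) m = bkt b h m" if "m \<le> j" for m
    using that by (intro bkt_prefix_cong[where K=j]) auto
  then show ?thesis unfolding Kcap_def cap_def Let_def by (intro arg_cong[where f=card]) auto
qed

lemma Kcap_append: "j \<le> Suc (length h) \<Longrightarrow> Kcap b (h @ [v]) j = Kcap b h j"
  by (simp add: Kcap_def)

lemma Ydesc_conv_card: "wf_history b h n \<Longrightarrow> Ydesc b h n j = card {i \<in> {j..n}. desc b h j i}"
  by (simp add: Ydesc_def wf_history_def)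

lemma Ydesc_append: "length h = n - 1 \<Longrightarrow> Ydesc b (h @ [v]) n j = Ydesc b h n j"
  by (simp add: Ydesc_def)

lemma Ydesc_eq_sum_Aind: "wf_history b h n \<Longrightarrow> Ydesc b h n j = (\<Sum>i=j..n. Aind b h j i)"
  by (simp add: Ydesc_conv_card Aind_def sum.If_cases Int_def)

text \<open>
  A bucket acquires children only once it is saturated, whereas the bucket of j was still
  unsaturated when j arrived (unless j founded it). Hence all its children, and with them all
  labels of its subtree lying outside it, are younger than j.
\<close>
lemma bkt_before_in_subtree:
  assumes wf: "wf_history b h n" and "1 \<le> m" "m < j" "j \<le> n"
    and sub: "in_subtree b h (bkt b h j) (bkt b h m)"
  shows "bkt b h m = bkt b h j"
proof (rule ccontr)
  let ?r = "bkt b h j"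
  assume "bkt b h m \<noteq> ?r"
  moreover have "bkt b h m \<le> m" using bkt_bounds[OF wf] assms by auto
  ultimately obtain c where c: "2 \<le> c" "c \<le> m" "bkt b h c = c" "h ! (c - 2) = ?r"
    using in_subtree_child[OF wf sub] assms by fastforce
  have "?r < c" using wf_history_parent[OF wf c(1)] c assms by auto
  then have saturated: "\<not> card {x \<in> {1..<c}. bkt b h x = ?r} < b"
    using c bkt_unfold[of b h c] by (auto split: if_splits)
  have "?r \<noteq> j" "2 \<le> j" using \<open>?r < c\<close> c assms by auto
  then have unsaturated: "card {x \<in> {1..<j}. bkt b h x = ?r} < b"
    using bkt_unfold[of b h j] by (auto split: if_splits)
  have "card {x \<in> {1..<c}. bkt b h x = ?r} \<le> card {x \<in> {1..<j}. bkt b h x = ?r}"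
    using c assms by (intro card_mono) auto
  with saturated unsaturated show False by linarith
qed

lemma sum_cap_subtree:
  assumes wf: "wf_history b h n" and j: "1 \<le> j" "j \<le> n"
  defines "S \<equiv> {u \<in> buckets b h n. in_subtree b h (bkt b h j) u}"
  shows "1 \<le> Kcap b h j" and "(\<Sum>u\<in>S. cap b h n u) = (Kcap b h j - 1) + Ydesc b h n j"
proof -
  let ?r = "bkt b h j"
  let ?A = "{m \<in> {1..<j}. bkt b h m = ?r}"
  let ?D = "{i \<in> {j..n}. desc b h j i}"
  have "{m \<in> {1..j}. bkt b h m = ?r} = insert j ?A" using j by auto
  then have K: "Kcap b h j = card ?A + 1" using j by (simp add: Kcap_conv_card)
  then show "1 \<le> Kcap b h j" by simp
  have r: "?r \<in> buckets b h n" using bkt_in_buckets[OF wf j] .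
  have finite_S: "finite S" by (simp add: S_def)
  have labels: "{m \<in> {1..n}. bkt b h m \<in> S} = ?A \<union> ?D"
  proof (intro equalityI subsetI)
    fix m assume "m \<in> {m \<in> {1..n}. bkt b h m \<in> S}"
    then show "m \<in> ?A \<union> ?D"
      using bkt_before_in_subtree[OF wf, of m j] j by (cases "m < j") (auto simp: S_def desc_def)
  next
    fix m assume "m \<in> ?A \<union> ?D"
    then show "m \<in> {m \<in> {1..n}. bkt b h m \<in> S}"
      using r bkt_in_buckets[OF wf, of m] j
      by (auto simp: S_def desc_def intro: in_subtree.self)
  qed
  have "(\<Sum>u\<in>S. cap b h n u) = (\<Sum>u\<in>S. card {m \<in> {m \<in> {1..n}. bkt b h m \<in> S}. bkt b h m = u})"
    by (auto simp: cap_def intro!: sum.cong arg_cong[where f=card])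
  also have "\<dots> = card {m \<in> {1..n}. bkt b h m \<in> S}"
    using sum.group[of "{m \<in> {1..n}. bkt b h m \<in> S}" S "bkt b h" "\<lambda>_. 1::nat"] finite_S
    by (simp add: image_subset_iff)
  also have "\<dots> = card ?A + card ?D"
    unfolding labels by (rule card_Un_disjoint) (auto simp: desc_def)
  finally show "(\<Sum>u\<in>S. cap b h n u) = (Kcap b h j - 1) + Ydesc b h n j"
    using K Ydesc_conv_card[OF wf] by simp
qed

lemma sum_outdeg_subtree:
  assumes wf: "wf_history b h n" and j: "1 \<le> j" "j \<le> n"
  defines "S \<equiv> {u \<in> buckets b h n. in_subtree b h (bkt b h j) u}"
  shows "bkt b h j \<in> S" and "(\<Sum>u\<in>S. outdeg b h n u) = card S - 1"
proof -
  let ?r = "bkt b h j"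
  show r: "?r \<in> S" using bkt_in_buckets[OF wf j] by (simp add: S_def in_subtree.self)
  have finite_S: "finite S" by (simp add: S_def)
  let ?M = "{m \<in> {2..n}. bkt b h m = m \<and> h ! (m - 2) \<in> S}"
  have children: "?M = S - {?r}"
  proof (intro equalityI subsetI)
    fix m assume m: "m \<in> ?M"
    then have m_bucket: "2 \<le> m" "m \<le> n" "bkt b h m = m" by auto
    have parent: "in_subtree b h ?r (h ! (m - 2))" using m by (simp add: S_def)
    have "h ! (m - 2) < m" using wf_history_parent[OF wf m_bucket(1,2)] by simp
    moreover have "?r \<le> h ! (m - 2)"
      using in_subtree_le[OF wf parent] \<open>h ! (m - 2) < m\<close> m_bucket(2) by simp
    moreover have "in_subtree b h ?r m" using in_subtree.step[OF m_bucket(1,3) parent] .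
    ultimately show "m \<in> S - {?r}" using m_bucket by (simp add: S_def buckets_def)
  next
    fix u assume u: "u \<in> S - {?r}"
    then have "2 \<le> u \<and> bkt b h u = u \<and> in_subtree b h ?r (h ! (u - 2))"
      by (auto simp: S_def elim: in_subtree.cases)
    with u show "u \<in> ?M"
      using wf_history_parent[OF wf, of u] by (auto simp: S_def buckets_def)
  qed
  have "(\<Sum>u\<in>S. outdeg b h n u) = (\<Sum>u\<in>S. card {m \<in> ?M. h ! (m - 2) = u})"
    by (auto simp: outdeg_def intro!: sum.cong arg_cong[where f=card])
  also have "\<dots> = card ?M"
    using sum.group[of ?M S "\<lambda>m. h ! (m - 2)" "\<lambda>_. 1::nat"] finite_S
    by (simp add: image_subset_iff)
  finally show "(\<Sum>u\<in>S. outdeg b h n u) = card S - 1"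
    using children r by (simp add: S_def)
qed

lemma sum_weight:
  "(\<Sum>u\<in>X. weight fam b h n u) = (case fam of
      BRT \<Rightarrow> real (\<Sum>u\<in>X. cap b h n u) / real n
    | Dary d \<Rightarrow> ((real d - 1) * real (\<Sum>u\<in>X. cap b h n u) + real (card X)
                  - real (\<Sum>u\<in>X. outdeg b h n u)) / ((real d - 1) * real n + 1)
    | PORT \<alpha> \<Rightarrow> (real (\<Sum>u\<in>X. outdeg b h n u) + (\<alpha> + 1) * real (\<Sum>u\<in>X. cap b h n u)
                  - real (card X)) / ((\<alpha> + 1) * real n - 1))"
  by (cases fam) (simp_all add: weight_def sum_divide_distrib[symmetric] sum.distrib
      sum_subtractf sum_distrib_left of_nat_sum)

lemma sum_weight_subtree:
  assumes wf: "wf_history b h n" and j: "1 \<le> j" "j \<le> n"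
  shows "(\<Sum>u\<in>{u \<in> buckets b h n. in_subtree b h (bkt b h j) u}. weight fam b h n u)
    = cond_formula fam (Kcap b h j) n (Ydesc b h n j)"
proof -
  let ?S = "{u \<in> buckets b h n. in_subtree b h (bkt b h j) u}"
  have "card ?S \<ge> 1"
    using card_mono[of ?S "{bkt b h j}"] sum_outdeg_subtree(1)[OF wf j] by simp
  then have outdeg: "real (\<Sum>u\<in>?S. outdeg b h n u) = real (card ?S) - 1"
    using sum_outdeg_subtree(2)[OF wf j] by (simp add: of_nat_diff)
  have cap: "real (\<Sum>u\<in>?S. cap b h n u) = real (Kcap b h j) - 1 + real (Ydesc b h n j)"
    using sum_cap_subtree[OF wf j] by (simp add: of_nat_diff)
  show ?thesis
    unfolding sum_weight cond_formula_def outdeg cap by (cases fam) (simp_all add: algebra_simps)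
qed

lemma cond_formula_1_n_n:
  assumes "valid_family fam" "1 \<le> n"
  shows "cond_formula fam 1 n n = 1"
proof (cases fam)
  case (Dary d)
  then have "0 \<le> (real d - 1) * real n" using assms by (simp add: valid_family_def)
  then show ?thesis using Dary by (simp add: cond_formula_def)
next
  case (PORT \<alpha>)
  then have "1 * 1 < (\<alpha> + 1) * real n"
    using assms by (intro mult_less_le_imp_less) (auto simp: valid_family_def)
  then show ?thesis using PORT by (simp add: cond_formula_def)
qed (use assms in \<open>simp add: cond_formula_def\<close>)

text \<open>The case j = 1 of the previous lemma: the subtree of the root bucket is the whole tree.\<close>
lemma sum_weight_buckets:
  assumes F: "valid_family fam" and wf: "wf_history b h n"
  shows "(\<Sum>u\<in>buckets b h n. weight fam b h n u) = 1"
proof -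
  have n: "1 \<le> n" using wf by (simp add: wf_history_def)
  have "{u \<in> buckets b h n. in_subtree b h (bkt b h 1) u} = buckets b h n"
    using in_subtree_root[OF wf] by auto
  moreover have "{m \<in> {1..1}. bkt b h m = bkt b h 1} = {1}" by auto
  then have "Kcap b h 1 = 1" by (simp add: Kcap_conv_card)
  moreover have "{i \<in> {1..n}. desc b h 1 i} = {1..n}"
    using in_subtree_root[OF wf] bkt_in_buckets[OF wf] by (auto simp: desc_def)
  then have "Ydesc b h n 1 = n" by (simp add: Ydesc_conv_card[OF wf])
  ultimately show ?thesis
    using sum_weight_subtree[OF wf order.refl n] cond_formula_1_n_n[OF F n] by simp
qed

lemma atLeastAtMost_Suc_filter:
  "a \<le> Suc n \<Longrightarrow>
    {m \<in> {a..Suc n}. P m} = {m \<in> {a..n}. P m} \<union> (if P (Suc n) then {Suc n} else {})"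
  by (auto simp: le_Suc_eq)

lemma card_atLeastAtMost_Suc_filter:
  "a \<le> Suc n \<Longrightarrow>
    card {m \<in> {a..Suc n}. P m} = card {m \<in> {a..n}. P m} + (if P (Suc n) then 1 else 0)"
  by (subst atLeastAtMost_Suc_filter) (auto simp: card_insert_if)

lemma outdeg_fresh: "wf_history b h n \<Longrightarrow> outdeg b h n (Suc n) = 0"
  using wf_history_parent[of b h n] by (fastforce simp: outdeg_def)

context
  fixes b h n v
  assumes wf: "wf_history b h n" and v_bucket: "v \<in> buckets b h n"
begin

lemma nth_append_old:
  assumes "2 \<le> k" "k \<le> n"
  shows "(h @ [v]) ! (k - 2) = h ! (k - 2)"
proof -
  have "k - 2 < length h" using wf assms by (auto simp: wf_history_def)
  then show ?thesis by (simp add: nth_append)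
qed

lemma nth_append_new: "(h @ [v]) ! (Suc n - 2) = v"
  using wf by (simp add: wf_history_def nth_append)

lemma bkt_append: "m \<le> n \<Longrightarrow> bkt b (h @ [v]) m = bkt b h m"
  by (rule bkt_prefix_cong[where K=n]) (simp_all add: nth_append_old)

lemma bkt_append_new: "bkt b (h @ [v]) (Suc n) = (if cap b h n v < b then v else Suc n)"
proof -
  have "{m \<in> {1..<Suc n}. bkt b (h @ [v]) m = v} = {m \<in> {1..n}. bkt b h m = v}"
    using bkt_append by auto
  moreover have "\<not> Suc n \<le> 1" using wf by (simp add: wf_history_def)
  ultimately show ?thesis using nth_append_new by (subst bkt_unfold) (simp add: cap_def)
qed

lemma wf_history_append: "wf_history b (h @ [v]) (Suc n)"
proof -
  have "1 \<le> (h @ [v]) ! (k - 2) \<and> (h @ [v]) ! (k - 2) < k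
      \<and> bkt b (h @ [v]) ((h @ [v]) ! (k - 2)) = (h @ [v]) ! (k - 2)"
    if k: "2 \<le> k" "k \<le> Suc n" for k
  proof (cases "k = Suc n")
    case True
    then show ?thesis using v_bucket bkt_append[of v] nth_append_new by (simp add: buckets_def)
  next
    case False
    with k wf_history_parent[OF wf, of k] show ?thesis by (simp add: nth_append_old bkt_append)
  qed
  then show ?thesis using wf by (simp add: wf_history_def)
qed

lemma cap_append:
  "cap b (h @ [v]) (Suc n) u = cap b h n u + (if bkt b (h @ [v]) (Suc n) = u then 1 else 0)"
  unfolding cap_def
  by (subst card_atLeastAtMost_Suc_filter) (auto simp: bkt_append intro!: arg_cong[where f=card])

lemma outdeg_append:
  "outdeg b (h @ [v]) (Suc n) u
    = outdeg b h n u + (if bkt b (h @ [v]) (Suc n) = Suc n \<and> v = u then 1 else 0)"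
proof -
  have "2 \<le> Suc n" using wf by (simp add: wf_history_def)
  then have "outdeg b (h @ [v]) (Suc n) u
      = card {m \<in> {2..n}. bkt b (h @ [v]) m = m \<and> (h @ [v]) ! (m - 2) = u}
        + (if bkt b (h @ [v]) (Suc n) = Suc n \<and> (h @ [v]) ! (Suc n - 2) = u then 1 else 0)"
    unfolding outdeg_def by (rule card_atLeastAtMost_Suc_filter)
  moreover have "{m \<in> {2..n}. bkt b (h @ [v]) m = m \<and> (h @ [v]) ! (m - 2) = u}
      = {m \<in> {2..n}. bkt b h m = m \<and> h ! (m - 2) = u}"
    using bkt_append nth_append_old by auto
  ultimately show ?thesis using nth_append_new by (simp add: outdeg_def)
qed

lemma buckets_append:
  "buckets b (h @ [v]) (Suc n)
    = buckets b h n \<union> (if bkt b (h @ [v]) (Suc n) = Suc n then {Suc n} else {})"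
  unfolding buckets_def by (subst atLeastAtMost_Suc_filter) (auto simp: bkt_append)

lemma in_subtree_append: "x \<le> n \<Longrightarrow> in_subtree b (h @ [v]) r x \<longleftrightarrow> in_subtree b h r x"
  using in_subtree_prefix_cong[of n "h @ [v]" h b r x]
    in_subtree_prefix_cong[of n h "h @ [v]" b r x] nth_append_old wf_history_parent[OF wf]
  by (metis (no_types, lifting))

lemma desc_append_new:
  assumes j: "1 \<le> j" "j \<le> n"
  shows "desc b (h @ [v]) j (Suc n) \<longleftrightarrow> in_subtree b h (bkt b h j) v"
proof -
  let ?r = "bkt b h j"
  have "?r \<le> n" using bkt_bounds[OF wf j] j by simp
  have v: "v \<le> n" using v_bucket by (simp add: buckets_def)
  have "in_subtree b (h @ [v]) ?r (Suc n) \<longleftrightarrow> in_subtree b (h @ [v]) ?r v"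
    if new: "bkt b (h @ [v]) (Suc n) = Suc n"
  proof
    assume "in_subtree b (h @ [v]) ?r (Suc n)"
    then show "in_subtree b (h @ [v]) ?r v"
      using \<open>?r \<le> n\<close> nth_append_new by (cases rule: in_subtree.cases) auto
  next
    assume "in_subtree b (h @ [v]) ?r v"
    then show "in_subtree b (h @ [v]) ?r (Suc n)"
      using in_subtree.step[of "Suc n" b "h @ [v]" ?r] new wf nth_append_new
      by (simp add: wf_history_def)
  qed
  then show ?thesis
    using j bkt_append_new in_subtree_append[OF v]
    by (auto simp: desc_def bkt_append split: if_splits)
qed

end

lemma weight_Dary_nonneg_iff:
  assumes "2 \<le> d"
  shows "0 \<le> weight (Dary d) b h n u \<longleftrightarrow> outdeg b h n u \<le> (d - 1) * cap b h n u + 1"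
    and "0 < weight (Dary d) b h n u \<longleftrightarrow> outdeg b h n u < (d - 1) * cap b h n u + 1"
proof -
  define X where "X = (d - 1) * cap b h n u + 1"
  have "0 \<le> (real d - 1) * real n" using assms by simp
  then have den: "0 < (real d - 1) * real n + 1" by linarith
  have w: "weight (Dary d) b h n u = (real X - real (outdeg b h n u)) / ((real d - 1) * real n + 1)"
    using assms by (simp add: weight_def X_def of_nat_diff)
  show "0 \<le> weight (Dary d) b h n u \<longleftrightarrow> outdeg b h n u \<le> (d - 1) * cap b h n u + 1"
    unfolding w X_def[symmetric] using den by (simp add: zero_le_divide_iff)
  show "0 < weight (Dary d) b h n u \<longleftrightarrow> outdeg b h n u < (d - 1) * cap b h n u + 1"
    unfolding w X_def[symmetric] using den by (simp add: zero_less_divide_iff)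
qed

lemma weight_nonneg:
  assumes F: "valid_family fam" and wf: "wf_history b h n" and u: "u \<in> buckets b h n"
    and Dary: "\<And>d. fam = Dary d \<Longrightarrow> outdeg b h n u \<le> (d - 1) * cap b h n u + 1"
  shows "0 \<le> weight fam b h n u"
proof (cases fam)
  case (Dary d)
  then show ?thesis using weight_Dary_nonneg_iff(1)[of d] assms by (simp add: valid_family_def)
next
  case (PORT \<alpha>)
  have \<alpha>: "0 < \<alpha>" using PORT F by (simp add: valid_family_def)
  have "1 \<le> real (cap b h n u)" "1 \<le> real n" using cap_pos[OF u] wf by (auto simp: wf_history_def)
  then have cap: "1 \<le> (\<alpha> + 1) * real (cap b h n u)" and n: "1 \<le> (\<alpha> + 1) * real n"
    using \<alpha> by (simp_all add: distrib_right add_increasing)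
  show ?thesis using PORT cap n by (auto simp: weight_def intro!: divide_nonneg_nonneg)
qed (simp add: weight_def)

text \<open>
  Off the support of the process a (b,d)-ary weight can be negative (a bucket with too many
  children), and pmf_of_list is only meaningful for nonnegative weights; this invariant of the
  support makes choose_bucket a genuine selection distribution.
\<close>
definition admissible :: "family \<Rightarrow> nat \<Rightarrow> nat list \<Rightarrow> nat \<Rightarrow> bool" where
  "admissible fam b h n \<longleftrightarrow> wf_history b h n \<and> (\<forall>u\<in>buckets b h n. 0 \<le> weight fam b h n u)"

definition bucket_weights :: "family \<Rightarrow> nat \<Rightarrow> nat list \<Rightarrow> nat \<Rightarrow> (nat \<times> real) list" where
  "bucket_weights fam b h n =
    map (\<lambda>v. (v, weight fam b h n v)) (filter (\<lambda>v. bkt b h v = v) [1..<Suc n])"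

lemma choose_bucket_eq: "choose_bucket fam b h n = pmf_of_list (bucket_weights fam b h n)"
  by (simp add: choose_bucket_def bucket_weights_def)

lemma sum_list_bucket_weights_filter:
  "sum_list (map snd (filter (\<lambda>x. P (fst x)) (bucket_weights fam b h n)))
    = (\<Sum>u\<in>{u \<in> buckets b h n. P u}. weight fam b h n u)"
proof -
  have "set (filter P (filter (\<lambda>v. bkt b h v = v) [1..<Suc n])) = {u \<in> buckets b h n. P u}"
    by (auto simp: buckets_def)
  then show ?thesis
    by (simp add: bucket_weights_def filter_map o_def sum_list_distinct_conv_sum_set)
qed

lemma pmf_of_list_wf_bucket_weights:
  assumes "valid_family fam" "admissible fam b h n"
  shows "pmf_of_list_wf (bucket_weights fam b h n)"
proof (rule pmf_of_list_wfI)
  show "sum_list (map snd (bucket_weights fam b h n)) = 1"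
    using sum_list_bucket_weights_filter[of "\<lambda>_. True"] sum_weight_buckets assms
    by (simp add: admissible_def)
qed (use assms in \<open>auto simp: bucket_weights_def admissible_def buckets_def\<close>)

lemma measure_choose_bucket:
  assumes "valid_family fam" "admissible fam b h n"
  shows "measure_pmf.prob (choose_bucket fam b h n) A
    = (\<Sum>u\<in>{u \<in> buckets b h n. u \<in> A}. weight fam b h n u)"
  using measure_pmf_of_list[OF pmf_of_list_wf_bucket_weights[OF assms]]
    sum_list_bucket_weights_filter[of "\<lambda>u. u \<in> A"]
  by (simp add: choose_bucket_eq)

lemma set_pmf_choose_bucket:
  assumes "valid_family fam" "admissible fam b h n" "v \<in> set_pmf (choose_bucket fam b h n)"
  shows "v \<in> buckets b h n \<and> 0 < weight fam b h n v"
proof -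
  have "measure_pmf.prob (choose_bucket fam b h n) {v} \<noteq> 0"
    using assms(3) by (simp add: measure_pmf_single set_pmf_iff)
  moreover have "{u \<in> buckets b h n. u \<in> {v}} = (if v \<in> buckets b h n then {v} else {})" by auto
  ultimately show ?thesis
    using measure_choose_bucket[OF assms(1,2), of "{v}"] assms(2)
    by (auto simp: admissible_def split: if_splits intro: order.not_eq_order_implies_strict)
qed

lemma admissible_append:
  assumes F: "valid_family fam" and adm: "admissible fam b h n"
    and v: "v \<in> buckets b h n" and pos: "0 < weight fam b h n v"
  shows "admissible fam b (h @ [v]) (Suc n)"
proof -
  have wf: "wf_history b h n" using adm by (simp add: admissible_def)
  have "0 \<le> weight fam b (h @ [v]) (Suc n) u" if u: "u \<in> buckets b (h @ [v]) (Suc n)" for u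
  proof (rule weight_nonneg[OF F wf_history_append[OF wf v] u])
    fix d assume fam: "fam = Dary d"
    then have d: "2 \<le> d" using F by (simp add: valid_family_def)
    have old: "outdeg b h n u \<le> (d - 1) * cap b h n u + 1"
    proof (cases "u \<in> buckets b h n")
      case True
      then show ?thesis using adm fam weight_Dary_nonneg_iff(1)[OF d] by (simp add: admissible_def)
    next
      case False
      then have "u = Suc n" using u buckets_append[OF wf v] by (auto split: if_splits)
      then show ?thesis using outdeg_fresh[OF wf] by simp
    qed
    have "outdeg b h n v < (d - 1) * cap b h n v + 1"
      using pos fam weight_Dary_nonneg_iff(2)[OF d] by simp
    with old have "outdeg b (h @ [v]) (Suc n) u \<le> (d - 1) * cap b h n u + 1"
      using outdeg_append[OF wf v, of u] by auto
    also have "\<dots> \<le> (d - 1) * cap b (h @ [v]) (Suc n) u + 1"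
      using cap_append[OF wf v, of u] by simp
    finally show "outdeg b (h @ [v]) (Suc n) u \<le> (d - 1) * cap b (h @ [v]) (Suc n) u + 1" .
  qed
  then show ?thesis using wf_history_append[OF wf v] by (simp add: admissible_def)
qed

lemma admissible_tree_pmf:
  assumes F: "valid_family fam"
  shows "1 \<le> n \<Longrightarrow> h \<in> set_pmf (tree_pmf fam b n) \<Longrightarrow> admissible fam b h n"
proof (induction n arbitrary: h)
  case (Suc n)
  show ?case
  proof (cases "n = 0")
    case True
    have wf: "wf_history b [] 1" by (simp add: wf_history_def)
    have "0 \<le> weight fam b [] 1 u" if "u \<in> buckets b [] 1" for u
      by (rule weight_nonneg[OF F wf that]) (simp add: outdeg_def)
    then show ?thesis using Suc.prems True wf by (simp add: admissible_def)
  next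
    case False
    then obtain h' v where h': "h' \<in> set_pmf (tree_pmf fam b n)"
      and v: "v \<in> set_pmf (choose_bucket fam b h' n)" and h: "h = h' @ [v]"
      using Suc.prems by auto
    have "admissible fam b h' n" using Suc.IH h' False by simp
    then show ?thesis using admissible_append[OF F] set_pmf_choose_bucket[OF F _ v] h by blast
  qed
qed simp

lemma measure_bind_pmf_proportional:
  assumes "\<And>x. x \<in> set_pmf M \<Longrightarrow> measure_pmf.prob (f x) A = c * measure_pmf.prob (f x) B"
  shows "measure_pmf.prob (bind_pmf M f) A = c * measure_pmf.prob (bind_pmf M f) B"
proof -
  have bind: "measure_pmf.prob (bind_pmf M f) X = (\<integral>x. measure_pmf.prob (f x) X \<partial>M)" for X
    unfolding measure_pmf_bind
    by (rule measure_pmf.measure_bind[where N="count_space UNIV"])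
      (auto simp: space_subprob_algebra measure_pmf.subprob_space_axioms)
  have "(\<integral>x. measure_pmf.prob (f x) A \<partial>M) = (\<integral>x. c * measure_pmf.prob (f x) B \<partial>M)"
    using assms by (intro integral_cong_AE) (auto simp: AE_measure_pmf_iff)
  then show ?thesis by (simp add: bind)
qed

lemma measure_map_pmf_conditional:
  assumes "\<And>x. x \<in> set_pmf p \<Longrightarrow> g x \<in> A \<longleftrightarrow> P \<and> x \<in> S"
  shows "measure_pmf.prob (map_pmf g p) A = (if P then measure_pmf.prob p S else 0)"
proof -
  have "g -` A \<inter> set_pmf p = (if P then S else {}) \<inter> set_pmf p" using assms by auto
  then have "measure_pmf.prob p (g -` A) = measure_pmf.prob p (if P then S else {})"
    by (metis measure_Int_set_pmf)
  then show ?thesis by simp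
qed

lemma measure_choose_bucket_subtree:
  assumes "valid_family fam" "admissible fam b h n" "1 \<le> j" "j \<le> n"
  shows "measure_pmf.prob (choose_bucket fam b h n) {u. in_subtree b h (bkt b h j) u}
    = cond_formula fam (Kcap b h j) n (Ydesc b h n j)"
  using measure_choose_bucket[OF assms(1,2)] sum_weight_subtree[of b h n j fam] assms
  by (simp add: admissible_def)

lemma measure_tree_pmf_desc_next:
  assumes F: "valid_family fam" and j: "1 \<le> j" "j \<le> i"
  shows "measure_pmf.prob (tree_pmf fam b (Suc i))
      {h. Kcap b h j = l \<and> Ydesc b h i j = y \<and> Aind b h j (Suc i) = 1}
    = cond_formula fam l i y
      * measure_pmf.prob (tree_pmf fam b (Suc i)) {h. Kcap b h j = l \<and> Ydesc b h i j = y}"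
proof -
  let ?D = "{h. Kcap b h j = l \<and> Ydesc b h i j = y}"
  let ?E = "{h. Kcap b h j = l \<and> Ydesc b h i j = y \<and> Aind b h j (Suc i) = 1}"
  let ?step = "\<lambda>h. map_pmf (\<lambda>v. h @ [v]) (choose_bucket fam b h i)"
  have tree: "tree_pmf fam b (Suc i) = bind_pmf (tree_pmf fam b i) ?step" using j by simp
  have "measure_pmf.prob (?step h) ?E = cond_formula fam l i y * measure_pmf.prob (?step h) ?D"
    if h: "h \<in> set_pmf (tree_pmf fam b i)" for h
  proof -
    let ?Q = "Kcap b h j = l \<and> Ydesc b h i j = y"
    have adm: "admissible fam b h i" using admissible_tree_pmf[OF F _ h] j by simp
    then have wf: "wf_history b h i" by (simp add: admissible_def)
    have prefix: "Kcap b (h @ [v]) j = Kcap b h j" "Ydesc b (h @ [v]) i j = Ydesc b h i j" for v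
      using wf j by (simp_all add: Kcap_append Ydesc_append wf_history_def)
    have "desc b (h @ [v]) j (Suc i) \<longleftrightarrow> in_subtree b h (bkt b h j) v"
      if "v \<in> set_pmf (choose_bucket fam b h i)" for v
      using desc_append_new[OF wf _ j] set_pmf_choose_bucket[OF F adm that] by blast
    then have "measure_pmf.prob (?step h) ?E
        = (if ?Q then cond_formula fam (Kcap b h j) i (Ydesc b h i j) else 0)"
      by (subst measure_map_pmf_conditional[where P="?Q" and S="{u. in_subtree b h (bkt b h j) u}"])
        (simp_all add: prefix Aind_def measure_choose_bucket_subtree[OF F adm j])
    moreover have "measure_pmf.prob (?step h) ?D = (if ?Q then 1 else 0)"
      by (subst measure_map_pmf_conditional[where P="?Q" and S=UNIV]) (simp_all add: prefix)
    ultimately show ?thesis by simp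
  qed
  then show ?thesis unfolding tree by (rule measure_bind_pmf_proportional)
qed

theorem mainTheorem6:
  fixes fam :: family and b j l :: nat
  assumes "b \<ge> 1" and "valid_family fam" and "j \<ge> 1" and "l \<in> {1..b}"
    and "measure_pmf.prob (tree_pmf fam b j) {h. Kcap b h j = l} > 0"
  shows "(\<forall>n\<ge>j. \<forall>h\<in>set_pmf (tree_pmf fam b n). Kcap b h j = l \<longrightarrow> Aind b h j j = 1)
       \<and> (\<forall>n\<ge>j. \<forall>h\<in>set_pmf (tree_pmf fam b n). Kcap b h j = l \<longrightarrow>
             Ydesc b h n j = (\<Sum>i=j..n. Aind b h j i))
       \<and> (\<forall>i\<ge>j. \<forall>y::nat.
             measure_pmf.prob (tree_pmf fam b (Suc i)) {h. Kcap b h j = l \<and> Ydesc b h i j = y} > 0 \<longrightarrow>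
             measure_pmf.prob (tree_pmf fam b (Suc i))
                 {h. Kcap b h j = l \<and> Ydesc b h i j = y \<and> Aind b h j (Suc i) = 1}
             / measure_pmf.prob (tree_pmf fam b (Suc i)) {h. Kcap b h j = l \<and> Ydesc b h i j = y}
             = cond_formula fam l i y)"
proof (intro conjI allI impI ballI)
  fix h show "Aind b h j j = 1" by (simp add: Aind_def desc_def in_subtree.self)
next
  fix n h assume "j \<le> n" "h \<in> set_pmf (tree_pmf fam b n)"
  then have "admissible fam b h n" using admissible_tree_pmf[OF assms(2)] assms(3) by simp
  then show "Ydesc b h n j = (\<Sum>i=j..n. Aind b h j i)"
    by (simp add: Ydesc_eq_sum_Aind admissible_def)
next
  fix i y assume "j \<le> i"
    and "measure_pmf.prob (tree_pmf fam b (Suc i)) {h. Kcap b h j = l \<and> Ydesc b h i j = y} > 0"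
  then show "measure_pmf.prob (tree_pmf fam b (Suc i))
        {h. Kcap b h j = l \<and> Ydesc b h i j = y \<and> Aind b h j (Suc i) = 1}
      / measure_pmf.prob (tree_pmf fam b (Suc i)) {h. Kcap b h j = l \<and> Ydesc b h i j = y}
      = cond_formula fam l i y"
    using measure_tree_pmf_desc_next[OF assms(2,3)] by simp
qed

end
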